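(* An eventually dendric shift space is minimal if and only if it is irreducible.
   Context: $A$ is a finite alphabet; a shift space is a closed subset $X\subseteq A^{\mathbb Z}$ with $\sigma(X)=X$; $\mathcal L(X)$ is its set of finite factors. $X$ is irreducible if for all $u,v\in\mathcal L(X)$ there is $w$ with $uwv\in\mathcal L(X)$. A nonempty shift space is minimal if it contains no nonempty shift space other than itself. For $w\in\mathcal L(X)$, the extension graph $\mathcal E_1(w)$ is the undirected bipartite graph with vertex set the disjoint union of $\{a\in A: aw\in\mathcal L(X)\}$ and $\{b\in A: wb\in\mathcal L(X)\}$, with an edge $(a,b)$ iff $awb\in\mathcal L(X)$; $X$ is eventually dendric if for some $m\ge0$, $\mathcal E_1(w)$ is a tree for every $w\in\mathcal L(X)$ of length $\ge m$. *)

theory Defs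
  imports "HOL-Analysis.Analysis"
begin

definition shift :: "(int \<Rightarrow> 'a) \<Rightarrow> (int \<Rightarrow> 'a)" where
  "shift x = (\<lambda>n. x (n + 1))"

definition full_shift_topology :: "'a set \<Rightarrow> (int \<Rightarrow> 'a) topology" where
  "full_shift_topology A = product_topology (\<lambda>_. discrete_topology A) UNIV"

definition shift_space :: "'a set \<Rightarrow> (int \<Rightarrow> 'a) set \<Rightarrow> bool" where
  "shift_space A X \<longleftrightarrow>
     X \<subseteq> {x. \<forall>n. x n \<in> A} \<and> closedin (full_shift_topology A) X \<and> shift ` X = X"

definition language :: "(int \<Rightarrow> 'a) set \<Rightarrow> 'a list set" where
  "language X = {w. \<exists>x\<in>X. \<exists>i::int. w = map (\<lambda>k. x (i + int k)) [0..<length w]}"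

definition irreducible_shift :: "(int \<Rightarrow> 'a) set \<Rightarrow> bool" where
  "irreducible_shift X \<longleftrightarrow>
     (\<forall>u\<in>language X. \<forall>v\<in>language X. \<exists>w. u @ w @ v \<in> language X)"

definition minimal_shift :: "'a set \<Rightarrow> (int \<Rightarrow> 'a) set \<Rightarrow> bool" where
  "minimal_shift A X \<longleftrightarrow> shift_space A X \<and> X \<noteq> {} \<and>
     (\<forall>Y. shift_space A Y \<and> Y \<noteq> {} \<and> Y \<subseteq> X \<longrightarrow> Y = X)"

definition uadj :: "('v \<times> 'v) set \<Rightarrow> 'v \<Rightarrow> 'v \<Rightarrow> bool" where
  "uadj E u v \<longleftrightarrow> (u, v) \<in> E \<or> (v, u) \<in> E"

definition ugraph_connected :: "'v set \<Rightarrow> ('v \<times> 'v) set \<Rightarrow> bool" where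
  "ugraph_connected V E \<longleftrightarrow> V \<noteq> {} \<and>
     (\<forall>u\<in>V. \<forall>v\<in>V. (u, v) \<in> {(p, q). p \<in> V \<and> q \<in> V \<and> uadj E p q}\<^sup>*)"

definition ugraph_acyclic :: "'v set \<Rightarrow> ('v \<times> 'v) set \<Rightarrow> bool" where
  "ugraph_acyclic V E \<longleftrightarrow> \<not> (\<exists>cs. 3 \<le> length cs \<and> distinct cs \<and> set cs \<subseteq> V \<and>
     (\<forall>i < length cs. uadj E (cs ! i) (cs ! ((i + 1) mod length cs))))"

definition ugraph_tree :: "'v set \<Rightarrow> ('v \<times> 'v) set \<Rightarrow> bool" where
  "ugraph_tree V E \<longleftrightarrow> ugraph_connected V E \<and> ugraph_acyclic V E"

text \<open>Extension graph \<open>\<E>\<^sub>1(w)\<close>: left extensions tagged \<open>Inl\<close>, right ones \<open>Inr\<close>.\<close>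
definition left_ext :: "(int \<Rightarrow> 'a) set \<Rightarrow> 'a list \<Rightarrow> 'a set" where
  "left_ext X w = {a. a # w \<in> language X}"

definition right_ext :: "(int \<Rightarrow> 'a) set \<Rightarrow> 'a list \<Rightarrow> 'a set" where
  "right_ext X w = {b. w @ [b] \<in> language X}"

definition ext_vertices :: "(int \<Rightarrow> 'a) set \<Rightarrow> 'a list \<Rightarrow> ('a + 'a) set" where
  "ext_vertices X w = Inl ` left_ext X w \<union> Inr ` right_ext X w"

definition ext_edges :: "(int \<Rightarrow> 'a) set \<Rightarrow> 'a list \<Rightarrow> (('a + 'a) \<times> ('a + 'a)) set" where
  "ext_edges X w = {(Inl a, Inr b) | a b. a # w @ [b] \<in> language X}"

definition eventually_dendric :: "(int \<Rightarrow> 'a) set \<Rightarrow> bool" where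
  "eventually_dendric X \<longleftrightarrow> (\<exists>m::nat. \<forall>w\<in>language X. m \<le> length w \<longrightarrow>
     ugraph_tree (ext_vertices X w) (ext_edges X w))"

end

theory Submission
  imports Defs
begin

text \<open>A minimal shift is uniformly recurrent (by compactness of the full shift), so any word
  reappears within bounded distance to the right of any other: minimal shifts are irreducible.

  Conversely, let \<open>Y \<subset> X\<close> be a subshift of an irreducible eventually dendric shift \<open>X\<close>.
  For long \<open>w\<close>, the tree \<open>\<E>\<^sub>1(w)\<close> has at most \<open>|L(w)| + |R(w)| - 1\<close> edges, i.e.
  \<open>\<Sum>\<^sub>a (|R(aw)| - 1) \<le> |R(w)| - 1\<close>. Summed over the words of \<open>Y\<close> of length \<open>n\<close>, the
  right branching of \<open>X\<close> is eventually nonincreasing in \<open>n\<close>, hence eventually constant, so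
  eventually every word \<open>aw \<in> L(X) - L(Y)\<close> with \<open>w \<in> L(Y)\<close> has a unique right extension;
  symmetrically on the left. Irreducibility yields a long \<open>p \<in> L(Y)\<close> with
  \<open>pc \<in> L(X) - L(Y)\<close>. If \<open>aw\<close> and \<open>wc\<close> both leave \<open>L(Y)\<close>, the edge \<open>(a, c)\<close> is a whole
  component of the connected graph \<open>\<E>\<^sub>1(w)\<close>, so \<open>w\<close> has no left extension in \<open>L(Y)\<close>;
  hence \<open>zpc \<in> L(X)\<close> forces \<open>zp \<in> L(Y)\<close>. Applied to \<open>pc t pc \<in> L(X)\<close> this gives
  \<open>pc \<in> L(Y)\<close>, a contradiction.\<close>

definition block :: "(int \<Rightarrow> 'a) \<Rightarrow> int \<Rightarrow> nat \<Rightarrow> 'a list" where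
  "block x i n = map (\<lambda>k. x (i + int k)) [0..<n]"

lemma length_block [simp]: "length (block x i n) = n"
  by (simp add: block_def)

lemma nth_block [simp]: "k < n \<Longrightarrow> block x i n ! k = x (i + int k)"
  by (simp add: block_def)

lemma block_add: "block x i (m + n) = block x i m @ block x (i + int m) n"
  by (rule nth_equalityI) (auto simp: nth_append algebra_simps)

lemma block_Suc_left: "block x i (Suc n) = x i # block x (i + 1) n"
  by (rule nth_equalityI) (auto simp: nth_Cons algebra_simps split: nat.splits)

lemma block_Suc_right: "block x i (Suc n) = block x i n @ [x (i + int n)]"
  using block_add[of x i n 1] by (simp add: block_def)

lemma block_translate: "block (\<lambda>t. x (t + d)) i n = block x (i + d) n"
  by (simp add: block_def algebra_simps)

lemma language_iff_block: "w \<in> language Z \<longleftrightarrow> (\<exists>x\<in>Z. \<exists>i. w = block x i (length w))"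
  by (simp add: language_def block_def)

lemma block_in_language: "x \<in> Z \<Longrightarrow> block x i n \<in> language Z"
  by (auto simp: language_iff_block)

lemma language_mono: "Y \<subseteq> Z \<Longrightarrow> language Y \<subseteq> language Z"
  unfolding language_def by blast

lemma language_prefixD: "u @ v \<in> language Z \<Longrightarrow> u \<in> language Z"
  by (auto simp: language_iff_block block_add intro: block_in_language)

lemma language_suffixD: "u @ v \<in> language Z \<Longrightarrow> v \<in> language Z"
  by (auto simp: language_iff_block block_add intro: block_in_language)

lemma language_Cons_snoc_prefixD: "a # w @ [b] \<in> language Z \<Longrightarrow> a # w \<in> language Z"
  using language_prefixD[of "a # w" "[b]"] by simp

lemma language_Cons_snoc_suffixD: "a # w @ [b] \<in> language Z \<Longrightarrow> w @ [b] \<in> language Z"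
  using language_suffixD[of "[a]" "w @ [b]"] by simp

lemma language_extend_left: "w \<in> language Z \<Longrightarrow> \<exists>a. a # w \<in> language Z"
  by (auto simp: language_iff_block) (metis block_Suc_left block_in_language diff_add_cancel)

lemma language_extend_right: "w \<in> language Z \<Longrightarrow> \<exists>b. w @ [b] \<in> language Z"
  by (auto simp: language_iff_block) (metis block_Suc_right block_in_language)

lemma set_language_subset:
  "Z \<subseteq> {x. \<forall>n. x n \<in> A} \<Longrightarrow> w \<in> language Z \<Longrightarrow> set w \<subseteq> A"
proof
  fix a assume "Z \<subseteq> {x. \<forall>n. x n \<in> A}" "w \<in> language Z" "a \<in> set w"
  then obtain x i where "x \<in> Z" "a \<in> set (block x i (length w))"
    by (metis language_iff_block)
  then show "a \<in> A" using \<open>Z \<subseteq> _\<close> by (auto simp: block_def)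
qed

lemma finite_language_length:
  assumes "finite A" "Z \<subseteq> {x. \<forall>n. x n \<in> A}"
  shows "finite {w \<in> language Z. length w = n}"
  using set_language_subset[OF assms(2)]
  by (intro rev_finite_subset[OF finite_lists_length_eq[OF \<open>finite A\<close>, of n]]) blast

section \<open>The topology of the full shift\<close>

lemma funpow_shift: "(shift ^^ n) x = (\<lambda>t. x (t + int n))"
  by (induction n) (auto simp: shift_def algebra_simps)

lemma shift_invariant_translate:
  assumes inv: "shift ` Z = Z" and "z \<in> Z"
  shows "(\<lambda>t. z (t + d)) \<in> Z"
proof -
  have funpow_inv: "(shift ^^ n) ` Z = Z" for n
  proof (induction n)
    case (Suc n)
    then show ?case by (metis funpow_Suc_right image_comp inv)
  qed simp
  show ?thesis
  proof (cases "d \<ge> 0")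
    case True
    then show ?thesis
      using funpow_inv[of "nat d"] \<open>z \<in> Z\<close> by (force simp: funpow_shift)
  next
    case False
    obtain z' where "z' \<in> Z" "z = (\<lambda>t. z' (t + int (nat (- d))))"
      using funpow_inv[of "nat (- d)"] \<open>z \<in> Z\<close> by (force simp: funpow_shift)
    with False show ?thesis by simp
  qed
qed

lemma finite_int_abs_bounded:
  fixes I :: "int set"
  assumes "finite I"
  obtains k :: nat where "\<And>t. t \<in> I \<Longrightarrow> \<bar>t\<bar> \<le> int k"
proof
  fix t assume "t \<in> I"
  then have "\<bar>t\<bar> \<le> (\<Sum>s\<in>I. \<bar>s\<bar>)"
    using assms by (intro member_le_sum) auto
  then show "\<bar>t\<bar> \<le> int (nat (\<Sum>s\<in>I. \<bar>s\<bar>))"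
    by simp
qed

lemma topspace_full_shift: "topspace (full_shift_topology A) = {x. \<forall>n. x n \<in> A}"
  by (auto simp: full_shift_topology_def PiE_def extensional_def)

lemma openin_full_shift_cylinder:
  assumes "finite I"
  shows "openin (full_shift_topology A) {y \<in> topspace (full_shift_topology A). \<forall>t\<in>I. y t = x t}"
proof -
  define U where "U t = (if t \<in> I then {x t} \<inter> A else A)" for t
  have "{y \<in> topspace (full_shift_topology A). \<forall>t\<in>I. y t = x t} = Pi\<^sub>E UNIV U"
    by (auto simp: topspace_full_shift U_def PiE_def Pi_def extensional_def split: if_splits)
  moreover have "finite {t. U t \<noteq> A}"
    using \<open>finite I\<close> by (rule rev_finite_subset) (auto simp: U_def)
  moreover have "U t \<subseteq> A" for t
    by (simp add: U_def)
  ultimately show ?thesis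
    by (simp add: full_shift_topology_def openin_PiE_gen)
qed

lemma in_closure_of_full_shift:
  assumes "Z \<subseteq> topspace (full_shift_topology A)"
  shows "x \<in> full_shift_topology A closure_of Z \<longleftrightarrow>
    x \<in> topspace (full_shift_topology A) \<and> (\<forall>k::nat. \<exists>z\<in>Z. \<forall>t. \<bar>t\<bar> \<le> int k \<longrightarrow> z t = x t)"
    (is "_ \<longleftrightarrow> ?x_in \<and> ?approx")
proof
  assume x: "x \<in> full_shift_topology A closure_of Z"
  have x_in: ?x_in
    using closure_of_subset_topspace x by (rule subsetD)
  have "\<exists>z\<in>Z. \<forall>t. \<bar>t\<bar> \<le> int k \<longrightarrow> z t = x t" for k :: nat
  proof -
    let ?C = "{y \<in> topspace (full_shift_topology A). \<forall>t\<in>{-int k..int k}. y t = x t}"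
    have near: "\<forall>T. x \<in> T \<and> openin (full_shift_topology A) T \<longrightarrow> (\<exists>y. y \<in> Z \<and> y \<in> T)"
      using x by (simp add: in_closure_of)
    have "x \<in> ?C"
      using x_in by simp
    moreover have "openin (full_shift_topology A) ?C"
      by (rule openin_full_shift_cylinder) simp
    ultimately obtain z where "z \<in> Z" "z \<in> ?C"
      using near by meson
    then show ?thesis
      by (intro bexI[of _ z]) (auto simp: abs_le_iff)
  qed
  then show "?x_in \<and> ?approx"
    using x by (simp add: in_closure_of)
next
  assume "?x_in \<and> ?approx"
  then have x: ?x_in and approx: ?approx by blast+
  have "\<exists>z. z \<in> Z \<and> z \<in> T" if "x \<in> T" "openin (full_shift_topology A) T" for T
  proof -
    have "\<exists>U. finite {t \<in> UNIV. U t \<noteq> topspace (discrete_topology A)} \<and>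
        (\<forall>t\<in>UNIV. openin (discrete_topology A) (U t)) \<and> x \<in> Pi\<^sub>E UNIV U \<and> Pi\<^sub>E UNIV U \<subseteq> T"
      using that unfolding full_shift_topology_def openin_product_topology_alt by blast
    then obtain U where U: "finite {t. U t \<noteq> A}" "x \<in> Pi\<^sub>E UNIV U" "Pi\<^sub>E UNIV U \<subseteq> T"
      by auto
    obtain k :: nat where k: "\<And>t. t \<in> {t. U t \<noteq> A} \<Longrightarrow> \<bar>t\<bar> \<le> int k"
      using U(1) by (metis finite_int_abs_bounded)
    obtain z where z: "z \<in> Z" "\<And>t. \<bar>t\<bar> \<le> int k \<Longrightarrow> z t = x t"
      using approx by blast
    have "z t \<in> U t" for t
    proof (cases "U t = A")
      case True
      then show ?thesis using z(1) assms by (auto simp: topspace_full_shift)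
    next
      case False
      then show ?thesis using U(2) k z(2) by (auto simp: PiE_def Pi_def)
    qed
    then have "z \<in> Pi\<^sub>E UNIV U"
      by (simp add: PiE_def extensional_def)
    then show ?thesis using U(3) z(1) by blast
  qed
  then show "x \<in> full_shift_topology A closure_of Z"
    using x by (simp add: in_closure_of)
qed

lemma closedin_full_shift_local:
  assumes "finite I" and local: "\<And>x y. (\<forall>t\<in>I. x t = y t) \<Longrightarrow> P x \<longleftrightarrow> P y"
  shows "closedin (full_shift_topology A) {x \<in> topspace (full_shift_topology A). P x}"
proof -
  obtain k :: nat where k: "\<And>t. t \<in> I \<Longrightarrow> \<bar>t\<bar> \<le> int k"
    using \<open>finite I\<close> by (metis finite_int_abs_bounded)
  let ?S = "{x \<in> topspace (full_shift_topology A). P x}"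
  have S_closure: "x \<in> full_shift_topology A closure_of ?S \<longleftrightarrow>
      x \<in> topspace (full_shift_topology A) \<and> (\<forall>k::nat. \<exists>z\<in>?S. \<forall>t. \<bar>t\<bar> \<le> int k \<longrightarrow> z t = x t)" for x
    by (rule in_closure_of_full_shift) blast
  have "x \<in> ?S" if x: "x \<in> full_shift_topology A closure_of ?S" for x
  proof -
    obtain z where z: "z \<in> ?S" "\<forall>t. \<bar>t\<bar> \<le> int k \<longrightarrow> z t = x t"
      using x unfolding S_closure by blast
    then have "P x"
      using local[of z x] k by simp
    then show ?thesis
      using x unfolding S_closure by blast
  qed
  then have "full_shift_topology A closure_of ?S = ?S"
    using closure_of_subset[of ?S] by blast
  then show ?thesis
    by (simp only: closure_of_eq)
qed

lemma shift_space_iff_blocks: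
  assumes "shift_space A Y" "\<forall>n. x n \<in> A"
  shows "x \<in> Y \<longleftrightarrow> (\<forall>i n. block x i n \<in> language Y)"
proof
  assume blocks: "\<forall>i n. block x i n \<in> language Y"
  have Y: "Y \<subseteq> topspace (full_shift_topology A)" "closedin (full_shift_topology A) Y"
    and inv: "shift ` Y = Y"
    using assms(1) by (auto simp: shift_space_def topspace_full_shift)
  have "\<exists>z\<in>Y. \<forall>t. \<bar>t\<bar> \<le> int k \<longrightarrow> z t = x t" for k :: nat
  proof -
    obtain y i where y: "y \<in> Y" "block x (- int k) (2 * k + 1) = block y i (2 * k + 1)"
      using blocks by (metis language_iff_block length_block)
    have "y (t + (i + int k)) = x t" if "\<bar>t\<bar> \<le> int k" for t
    proof -
      have "nat (t + int k) < 2 * k + 1" and "int (nat (t + int k)) = t + int k"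
        using that by auto
      then show ?thesis
        using arg_cong[OF y(2), of "\<lambda>w. w ! nat (t + int k)"] by (simp add: algebra_simps)
    qed
    moreover have "(\<lambda>t. y (t + (i + int k))) \<in> Y"
      by (rule shift_invariant_translate[OF inv y(1)])
    ultimately show ?thesis
      by (intro bexI[of _ "\<lambda>t. y (t + (i + int k))"]) simp_all
  qed
  then have "x \<in> full_shift_topology A closure_of Y"
    unfolding in_closure_of_full_shift[OF Y(1)] topspace_full_shift using assms(2) by blast
  then show "x \<in> Y"
    using Y(2) closure_of_eq[of "full_shift_topology A" Y] by simp
qed (auto intro: block_in_language)

section \<open>Minimal shifts are irreducible\<close>

lemma block_shift: "block (shift x) i n = block x (i + 1) n"
  using block_translate[of x 1 i n] by (simp add: shift_def[abs_def])

lemma closedin_full_shift_avoiding: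
  assumes "finite J"
  shows "closedin (full_shift_topology A)
    {x \<in> topspace (full_shift_topology A). \<forall>j\<in>J. block x j (length v) \<noteq> v}"
proof (rule closedin_full_shift_local)
  show "finite (\<Union>j\<in>J. {j..<j + int (length v)})"
    using assms by blast
  fix x y :: "int \<Rightarrow> 'a"
  assume "\<forall>t\<in>(\<Union>j\<in>J. {j..<j + int (length v)}). x t = y t"
  then have "block x j (length v) = block y j (length v)" if "j \<in> J" for j
    using that by (auto simp: block_def)
  then show "(\<forall>j\<in>J. block x j (length v) \<noteq> v) \<longleftrightarrow> (\<forall>j\<in>J. block y j (length v) \<noteq> v)"
    by auto
qed

lemma shift_space_avoiding:
  assumes X: "shift_space A X"
  shows "shift_space A {x \<in> X. \<forall>j. block x j (length v) \<noteq> v}"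
    (is "shift_space A ?S")
proof -
  have XA: "X \<subseteq> topspace (full_shift_topology A)" and inv: "shift ` X = X"
    using X by (auto simp: shift_space_def topspace_full_shift)
  have "?S = X \<inter> (\<Inter>j. {x \<in> topspace (full_shift_topology A). \<forall>i\<in>{j}. block x i (length v) \<noteq> v})"
    using XA by auto
  then have "closedin (full_shift_topology A) ?S"
    using X closedin_full_shift_avoiding[of "{_}" A v]
    by (auto simp: shift_space_def intro!: closedin_Int closedin_Inter)
  moreover have "shift ` ?S = ?S"
  proof (intro equalityI subsetI)
    fix y assume "y \<in> shift ` ?S"
    then show "y \<in> ?S"
      using inv by (auto simp: block_shift)
  next
    fix x assume x: "x \<in> ?S"
    let ?x' = "\<lambda>t. x (t + - 1)"
    have "?x' \<in> X"
      using x shift_invariant_translate[OF inv] by blast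
    moreover have "block ?x' j (length v) \<noteq> v" for j
      using x unfolding block_translate by blast
    ultimately have "?x' \<in> ?S"
      by blast
    moreover have "x = shift ?x'"
      by (simp add: shift_def)
    ultimately show "x \<in> shift ` ?S"
      by blast
  qed
  ultimately show ?thesis
    using X by (auto simp: shift_space_def)
qed

lemma minimal_shift_block_occurs:
  assumes min: "minimal_shift A X" and v: "v \<in> language X" and x: "x \<in> X"
  shows "\<exists>j. block x j (length v) = v"
proof (rule ccontr)
  let ?S = "{x \<in> X. \<forall>j. block x j (length v) \<noteq> v}"
  assume "\<not> ?thesis"
  then have "?S \<noteq> {}"
    using x by blast
  then have "?S = X"
    using min shift_space_avoiding[of A X v] by (simp add: minimal_shift_def)
  moreover obtain y i where "y \<in> X" "block y i (length v) = v"
    using v by (metis language_iff_block)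
  ultimately have "y \<in> ?S"
    by simp
  then show False
    using \<open>block y i (length v) = v\<close> by blast
qed

lemma compact_space_full_shift: "finite A \<Longrightarrow> compact_space (full_shift_topology A)"
  by (simp add: full_shift_topology_def compact_space_product_topology
      compact_space_discrete_topology)

lemma minimal_shift_uniformly_recurrent:
  assumes "finite A" and min: "minimal_shift A X" and v: "v \<in> language X"
  shows "\<exists>N::nat. \<forall>x\<in>X. \<exists>j. \<bar>j\<bar> \<le> int N \<and> block x j (length v) = v"
proof (rule ccontr)
  define K where "K N = {x \<in> X. \<forall>j\<in>{-int N..int N}. block x j (length v) \<noteq> v}" for N :: nat
  assume no_bound: "\<not> ?thesis"
  have "K N \<noteq> {}" for N
  proof -
    obtain x where "x \<in> X" "\<forall>j. \<bar>j\<bar> \<le> int N \<longrightarrow> block x j (length v) \<noteq> v"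
      using no_bound by blast
    then have "x \<in> K N"
      by (auto simp: K_def abs_le_iff)
    then show ?thesis
      by blast
  qed
  moreover have "closedin (full_shift_topology A) (K N)" for N
  proof -
    have "K N = X \<inter> {x \<in> topspace (full_shift_topology A).
        \<forall>j\<in>{-int N..int N}. block x j (length v) \<noteq> v}"
      using min by (auto simp: K_def minimal_shift_def shift_space_def topspace_full_shift)
    then show ?thesis
      using min closedin_full_shift_avoiding[of "{-int N..int N}" A v]
      by (simp add: minimal_shift_def shift_space_def closedin_Int)
  qed
  moreover have "decseq K"
    by (auto simp: decseq_def K_def)
  ultimately obtain x where "x \<in> (\<Inter>N. K N)"
    using compact_space_imp_nest[OF compact_space_full_shift[OF \<open>finite A\<close>]] by blast
  then have "x \<in> K (nat \<bar>j\<bar>)" for j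
    by blast
  moreover have "j \<in> {-int (nat \<bar>j\<bar>)..int (nat \<bar>j\<bar>)}" for j
    by simp linarith
  ultimately have "x \<in> X" "block x j (length v) \<noteq> v" for j
    unfolding K_def by blast+
  then show False
    using minimal_shift_block_occurs[OF min v] by blast
qed

lemma minimal_imp_irreducible:
  assumes "finite A" and min: "minimal_shift A X"
  shows "irreducible_shift X"
  unfolding irreducible_shift_def
proof (intro ballI)
  fix u v assume u: "u \<in> language X" and v: "v \<in> language X"
  have inv: "shift ` X = X"
    using min by (simp add: minimal_shift_def shift_space_def)
  obtain N :: nat where N: "\<forall>x\<in>X. \<exists>j. \<bar>j\<bar> \<le> int N \<and> block x j (length v) = v"
    using minimal_shift_uniformly_recurrent[OF assms v] by blast
  obtain x i where x: "x \<in> X" "u = block x i (length u)"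
    using u by (metis language_iff_block)
  define d where "d = i + int (length u) + int N"
  obtain j where j: "\<bar>j\<bar> \<le> int N" "block x (j + d) (length v) = v"
    using N shift_invariant_translate[OF inv x(1), of d] by (auto simp: block_translate)
  define g where "g = nat (j + int N)"
  have "int g = j + int N"
    using j(1) by (simp add: g_def)
  then have "block x (i + int (length u) + int g) (length v) = v"
    using j(2) by (simp add: d_def algebra_simps)
  then have "block x i (length u + (g + length v)) = u @ block x (i + int (length u)) g @ v"
    using x(2) unfolding block_add by (simp add: add.assoc)
  then show "\<exists>w. u @ w @ v \<in> language X"
    using block_in_language[OF x(1)] by metis
qed

section \<open>Acyclic graphs\<close>

definition ugraph_path :: "'v set \<Rightarrow> ('v \<times> 'v) set \<Rightarrow> 'v list \<Rightarrow> bool" where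
  "ugraph_path V E p \<longleftrightarrow> p \<noteq> [] \<and> distinct p \<and> set p \<subseteq> V \<and>
     (\<forall>j. Suc j < length p \<longrightarrow> uadj E (p ! j) (p ! Suc j))"

lemma uadj_sym: "uadj E u v \<Longrightarrow> uadj E v u"
  by (auto simp: uadj_def)

lemma ugraph_path_length_le:
  "finite V \<Longrightarrow> ugraph_path V E p \<Longrightarrow> length p \<le> card V"
  by (metis card_mono distinct_card ugraph_path_def)

lemma ugraph_path_Cons:
  assumes "ugraph_path V E p" "y \<in> V" "y \<notin> set p" "uadj E y (hd p)"
  shows "ugraph_path V E (y # p)"
  unfolding ugraph_path_def
proof (intro conjI allI impI)
  fix j assume "Suc j < length (y # p)"
  then show "uadj E ((y # p) ! j) ((y # p) ! Suc j)"
    using assms by (cases j) (auto simp: ugraph_path_def hd_conv_nth)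
qed (use assms in \<open>auto simp: ugraph_path_def\<close>)

lemma ugraph_path_closed_cycle:
  assumes p: "ugraph_path V E p" and i: "2 \<le> i" "i < length p" and closing: "uadj E (p ! i) (p ! 0)"
  shows "\<not> ugraph_acyclic V E"
proof -
  let ?cs = "take (Suc i) p"
  have len: "length ?cs = Suc i"
    using i by simp
  have "uadj E (?cs ! j) (?cs ! ((j + 1) mod length ?cs))" if "j < length ?cs" for j
  proof (cases "j = i")
    case True
    then show ?thesis
      using closing len by simp
  next
    case False
    then have "Suc j < Suc i" "Suc j < length p" "(j + 1) mod length ?cs = Suc j"
      using that len i by auto
    then show ?thesis
      using p that len by (simp add: ugraph_path_def)
  qed
  moreover have "3 \<le> length ?cs" "distinct ?cs" "set ?cs \<subseteq> V"
    using p i set_take_subset[of "Suc i" p] by (auto simp: ugraph_path_def)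
  ultimately show ?thesis
    unfolding ugraph_acyclic_def by blast
qed

lemma ugraph_acyclic_has_leaf:
  assumes fin: "finite V" and "V \<noteq> {}" and EV: "E \<subseteq> V \<times> V" and loopfree: "\<And>u. (u, u) \<notin> E"
    and acyclic: "ugraph_acyclic V E"
  shows "\<exists>x\<in>V. \<forall>y z. uadj E x y \<longrightarrow> uadj E x z \<longrightarrow> y = z"
proof -
  obtain x0 where "x0 \<in> V"
    using \<open>V \<noteq> {}\<close> by blast
  then have "ugraph_path V E [x0]"
    by (simp add: ugraph_path_def)
  moreover have "\<forall>q. ugraph_path V E q \<longrightarrow> length q < Suc (card V)"
    using ugraph_path_length_le[OF fin] by (simp add: less_Suc_eq_le)
  ultimately obtain p where p: "ugraph_path V E p"
    and longest: "\<And>q. ugraph_path V E q \<Longrightarrow> length q \<le> length p"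
    using ex_has_greatest_nat[of "ugraph_path V E" "[x0]" length "Suc (card V)"] by blast
  have p0: "p ! 0 \<in> V" "hd p = p ! 0"
    using p by (auto simp: ugraph_path_def hd_conv_nth)
  have on_path: "y \<in> set p" if "uadj E (p ! 0) y" for y
  proof (rule ccontr)
    assume "y \<notin> set p"
    moreover have "y \<in> V"
      using that EV by (auto simp: uadj_def)
    ultimately have "ugraph_path V E (y # p)"
      using p that p0 by (intro ugraph_path_Cons) (auto intro: uadj_sym)
    then show False
      using longest by fastforce
  qed
  have "\<forall>y z. uadj E (p ! 0) y \<longrightarrow> uadj E (p ! 0) z \<longrightarrow> y = z"
  proof (intro allI impI, rule ccontr)
    fix y z assume yz: "uadj E (p ! 0) y" "uadj E (p ! 0) z" "y \<noteq> z"
    then obtain w where w: "uadj E (p ! 0) w" "w \<in> set p" "Suc 0 < length p \<longrightarrow> w \<noteq> p ! 1"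
      using on_path by metis
    then obtain i where i: "i < length p" "p ! i = w"
      by (metis in_set_conv_nth)
    have "i \<noteq> 0"
      using w(1) i(2) loopfree unfolding uadj_def by metis
    moreover have "i \<noteq> 1"
      using w(3) i by auto
    ultimately show False
      using ugraph_path_closed_cycle[OF p _ i(1)] w(1) i(2) acyclic by (auto intro: uadj_sym)
  qed
  then show ?thesis
    using p0 by blast
qed

lemma ugraph_acyclic_subgraph:
  "ugraph_acyclic V E \<Longrightarrow> V' \<subseteq> V \<Longrightarrow> E' \<subseteq> E \<Longrightarrow> ugraph_acyclic V' E'"
  unfolding ugraph_acyclic_def uadj_def by blast

lemma ugraph_acyclic_card_edges:
  assumes "finite V" "E \<subseteq> V \<times> V" "\<And>u v. (u, v) \<in> E \<Longrightarrow> (v, u) \<notin> E"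
    and "ugraph_acyclic V E"
  shows "card E \<le> card V - 1"
  using assms
proof (induction "card V" arbitrary: V E rule: less_induct)
  case less
  note fin = less.prems(1) and EV = less.prems(2) and asym = less.prems(3)
    and acyclic = less.prems(4)
  show ?case
  proof (cases "V = {}")
    case False
    obtain x where x: "x \<in> V" and leaf: "\<And>y z. uadj E x y \<Longrightarrow> uadj E x z \<Longrightarrow> y = z"
      using ugraph_acyclic_has_leaf[OF fin False EV _ acyclic] asym by blast
    show ?thesis
    proof (cases "V = {x}")
      case True
      then have "E = {}"
        using EV asym by blast
      then show ?thesis
        by simp
    next
      case False
      define E' where "E' = {e \<in> E. fst e \<noteq> x \<and> snd e \<noteq> x}"
      have "card E' \<le> card (V - {x}) - 1"
        using x fin EV asym acyclic card_gt_0_iff[of V]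
        by (intro less.hyps) (auto simp: E'_def card_Diff1_less intro: ugraph_acyclic_subgraph)
      moreover have "card (E - E') \<le> 1"
      proof -
        have "finite (E - E')"
          using EV fin by (meson finite_Diff finite_SigmaI finite_subset)
        moreover have "\<forall>e\<in>E - E'. \<forall>f\<in>E - E'. e = f"
          using leaf asym by (fastforce simp: E'_def uadj_def)
        ultimately show ?thesis
          using card_le_Suc0_iff_eq by (metis One_nat_def)
      qed
      moreover have "card E \<le> card E' + card (E - E')"
        using card_Un_le[of E' "E - E'"] by (simp add: Un_absorb1 E'_def)
      moreover have "card {x} < card V"
        using False x by (intro psubset_card_mono[OF fin]) auto
      ultimately show ?thesis
        using card_Diff_singleton[OF x] by simp
    qed
  qed (use EV in simp)
qed

section \<open>Extension graphs and branching\<close>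

lemma potential_eventually_vanishes:
  fixes S :: "nat \<Rightarrow> 'w set" and C :: "'w \<Rightarrow> 'w set" and \<rho> :: "'w \<Rightarrow> nat"
  assumes fin_S: "\<And>n. finite (S n)" and fin_C: "\<And>w. finite (C w)"
    and S_Suc: "\<And>n. S (Suc n) \<subseteq> (\<Union>w\<in>S n. C w)"
    and disjoint: "\<And>n. disjoint_family_on C (S n)"
    and local: "\<And>n w. m \<le> n \<Longrightarrow> w \<in> S n \<Longrightarrow> (\<Sum>v\<in>C w. \<rho> v) \<le> \<rho> w"
  shows "\<exists>N. \<forall>n\<ge>N. \<forall>w\<in>S n. \<forall>v\<in>C w - S (Suc n). \<rho> v = 0"
proof -
  define \<Phi> where "\<Phi> n = (\<Sum>w\<in>S n. \<rho> w)" for n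
  define D where "D n = (\<Sum>w\<in>S n. \<Sum>v\<in>C w - S (Suc n). \<rho> v)" for n
  have descent: "\<Phi> (Suc n) + D n \<le> \<Phi> n" if "m \<le> n" for n
  proof -
    have "\<Phi> (Suc n) = sum \<rho> (\<Union>w\<in>S n. C w \<inter> S (Suc n))"
      unfolding \<Phi>_def by (rule arg_cong[where f = "sum \<rho>"]) (use S_Suc in blast)
    also have "\<dots> = (\<Sum>w\<in>S n. \<Sum>v\<in>C w \<inter> S (Suc n). \<rho> v)"
    proof (rule sum.UNION_disjoint)
      show "\<forall>v\<in>S n. \<forall>w\<in>S n. v \<noteq> w \<longrightarrow> C v \<inter> S (Suc n) \<inter> (C w \<inter> S (Suc n)) = {}"
        using disjoint[of n] unfolding disjoint_family_on_def by blast
    qed (simp_all add: fin_S fin_C)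
    finally have "\<Phi> (Suc n) + D n = (\<Sum>w\<in>S n. \<Sum>v\<in>C w. \<rho> v)"
      by (simp add: D_def sum.distrib[symmetric] sum.Int_Diff[OF fin_C, symmetric])
    also have "\<dots> \<le> \<Phi> n"
      unfolding \<Phi>_def using local[OF that] by (rule sum_mono)
    finally show ?thesis .
  qed
  \<comment> \<open>\<open>\<Phi>\<close> decreases from \<open>m\<close> on, so it is constant beyond a minimum point, which forces \<open>D = 0\<close>\<close>
  obtain N where N: "m \<le> N" "\<And>n. m \<le> n \<Longrightarrow> \<Phi> N \<le> \<Phi> n"
    using ex_has_least_nat[where P = "\<lambda>n. m \<le> n" and k = m and m = \<Phi>] by blast
  have below_N: "\<Phi> n \<le> \<Phi> N" if "N \<le> n" for n
    using that
  proof (induction rule: dec_induct)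
    case (step n)
    then show ?case
      using \<open>m \<le> N\<close> descent[of n] by linarith
  qed simp
  have "D n = 0" if "N \<le> n" for n
    using below_N[OF that] N(2)[of "Suc n"] descent[of n] that \<open>m \<le> N\<close> by simp
  then show ?thesis
    using fin_S fin_C by (auto simp: D_def)
qed

context
  fixes A :: "'a set" and X :: "(int \<Rightarrow> 'a) set"
  assumes finite_A: "finite A" and X_letters: "X \<subseteq> {x. \<forall>n. x n \<in> A}"
begin

lemma finite_left_ext: "finite (left_ext X w)"
  using set_language_subset[OF X_letters]
  by (intro finite_subset[OF _ finite_A]) (fastforce simp: left_ext_def)

lemma finite_right_ext: "finite (right_ext X w)"
  using set_language_subset[OF X_letters]
  by (intro finite_subset[OF _ finite_A]) (fastforce simp: right_ext_def)

lemma card_ext_edges_left: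
  "card (ext_edges X w) = (\<Sum>a\<in>left_ext X w. card (right_ext X (a # w)))"
proof -
  have edges: "ext_edges X w = (\<lambda>(a, b). (Inl a, Inr b)) ` (SIGMA a:left_ext X w. right_ext X (a # w))"
    by (auto simp: ext_edges_def left_ext_def right_ext_def image_iff
        dest: language_Cons_snoc_prefixD)
  have "inj_on (\<lambda>(a, b). (Inl a, Inr b)) (SIGMA a:left_ext X w. right_ext X (a # w))"
    by (auto simp: inj_on_def)
  then have "card (ext_edges X w) = card (SIGMA a:left_ext X w. right_ext X (a # w))"
    unfolding edges by (rule card_image)
  then show ?thesis
    by (simp add: card_SigmaI finite_left_ext finite_right_ext)
qed

lemma card_ext_edges_right:
  "card (ext_edges X w) = (\<Sum>b\<in>right_ext X w. card (left_ext X (w @ [b])))"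
proof -
  have edges: "ext_edges X w = (\<lambda>(b, a). (Inl a, Inr b)) ` (SIGMA b:right_ext X w. left_ext X (w @ [b]))"
    by (auto simp: ext_edges_def left_ext_def right_ext_def image_iff
        dest: language_Cons_snoc_suffixD)
  have "inj_on (\<lambda>(b, a). (Inl a, Inr b)) (SIGMA b:right_ext X w. left_ext X (w @ [b]))"
    by (auto simp: inj_on_def)
  then have "card (ext_edges X w) = card (SIGMA b:right_ext X w. left_ext X (w @ [b]))"
    unfolding edges by (rule card_image)
  then show ?thesis
    by (simp add: card_SigmaI finite_left_ext finite_right_ext)
qed

lemma card_ext_edges_le_if_tree:
  assumes "ugraph_tree (ext_vertices X w) (ext_edges X w)"
  shows "card (ext_edges X w) \<le> card (left_ext X w) + card (right_ext X w) - 1"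
proof -
  have "card (ext_edges X w) \<le> card (ext_vertices X w) - 1"
  proof (rule ugraph_acyclic_card_edges)
    show "finite (ext_vertices X w)"
      by (simp add: ext_vertices_def finite_left_ext finite_right_ext)
    show "ext_edges X w \<subseteq> ext_vertices X w \<times> ext_vertices X w"
      by (auto simp: ext_edges_def ext_vertices_def left_ext_def right_ext_def
          dest: language_Cons_snoc_prefixD language_Cons_snoc_suffixD)
    show "\<And>u v. (u, v) \<in> ext_edges X w \<Longrightarrow> (v, u) \<notin> ext_edges X w"
      by (auto simp: ext_edges_def)
    show "ugraph_acyclic (ext_vertices X w) (ext_edges X w)"
      using assms by (simp add: ugraph_tree_def)
  qed
  moreover have "card (ext_vertices X w) = card (left_ext X w) + card (right_ext X w)"
    unfolding ext_vertices_def
    by (subst card_Un_disjoint) (auto simp: finite_left_ext finite_right_ext card_image)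
  ultimately show ?thesis
    by simp
qed

lemma tree_sum_right_branching_le:
  assumes "ugraph_tree (ext_vertices X w) (ext_edges X w)"
  shows "(\<Sum>a\<in>left_ext X w. card (right_ext X (a # w)) - 1) \<le> card (right_ext X w) - 1"
proof -
  have "1 \<le> card (right_ext X (a # w))" if "a \<in> left_ext X w" for a
    using that language_extend_right[of "a # w" X] finite_right_ext[of "a # w"]
    by (force simp: left_ext_def right_ext_def Suc_le_eq card_gt_0_iff)
  then have "(\<Sum>a\<in>left_ext X w. card (right_ext X (a # w)) - 1)
      = card (ext_edges X w) - card (left_ext X w)"
    by (simp add: sum_subtractf_nat card_ext_edges_left)
  then show ?thesis
    using card_ext_edges_le_if_tree[OF assms] by linarith
qed

lemma tree_sum_left_branching_le:
  assumes "ugraph_tree (ext_vertices X w) (ext_edges X w)"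
  shows "(\<Sum>b\<in>right_ext X w. card (left_ext X (w @ [b])) - 1) \<le> card (left_ext X w) - 1"
proof -
  have "1 \<le> card (left_ext X (w @ [b]))" if "b \<in> right_ext X w" for b
    using that language_extend_left[of "w @ [b]" X] finite_left_ext[of "w @ [b]"]
    by (force simp: left_ext_def right_ext_def Suc_le_eq card_gt_0_iff)
  then have "(\<Sum>b\<in>right_ext X w. card (left_ext X (w @ [b])) - 1)
      = card (ext_edges X w) - card (right_ext X w)"
    by (simp add: sum_subtractf_nat card_ext_edges_right)
  then show ?thesis
    using card_ext_edges_le_if_tree[OF assms] by linarith
qed

end

section \<open>Irreducible eventually dendric shifts are minimal\<close>

lemma card_le_1_eq_singleton: "finite S \<Longrightarrow> card S \<le> 1 \<Longrightarrow> x \<in> S \<Longrightarrow> S = {x}"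
  using card_le_Suc0_iff_eq by fastforce

lemma ext_graph_isolated_edge:
  assumes connected: "ugraph_connected (ext_vertices X w) (ext_edges X w)"
    and right: "right_ext X (a # w) = {c}" and left: "left_ext X (w @ [c]) = {a}"
  shows "left_ext X w = {a}"
proof -
  let ?R = "{(p, q). p \<in> ext_vertices X w \<and> q \<in> ext_vertices X w \<and> uadj (ext_edges X w) p q}"
  have a: "a \<in> left_ext X w"
    using right by (auto simp: left_ext_def right_ext_def dest: language_Cons_snoc_prefixD)
  have component: "q \<in> {Inl a, Inr c}" if "(Inl a, q) \<in> ?R\<^sup>*" for q
    using that
  proof (induction rule: rtrancl_induct)
    case (step q r)
    then have "uadj (ext_edges X w) q r"
      by simp
    with step.IH right left show ?case
      by (auto simp: uadj_def ext_edges_def left_ext_def right_ext_def)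
  qed simp
  have "(Inl a, Inl a') \<in> ?R\<^sup>*" if "a' \<in> left_ext X w" for a'
    using connected that a by (simp add: ugraph_connected_def ext_vertices_def)
  then show ?thesis
    using component a by blast
qed

lemma language_first_exit:
  assumes "y \<in> language Y" "y @ z \<notin> language Y"
  shows "\<exists>p c s. p \<in> language Y \<and> p @ [c] \<notin> language Y \<and> length y \<le> length p \<and> y @ z = p @ c # s"
  using assms
proof (induction z arbitrary: y)
  case (Cons c z)
  show ?case
  proof (cases "y @ [c] \<in> language Y")
    case True
    then show ?thesis
      using Cons.IH[of "y @ [c]"] Cons.prems(2) by fastforce
  next
    case False
    then show ?thesis
      using Cons.prems(1) by fastforce
  qed
qed simp

context
  fixes A :: "'a set" and X Y :: "(int \<Rightarrow> 'a) set" and m :: nat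
  assumes finite_A: "finite A" and X_letters: "X \<subseteq> {x. \<forall>n. x n \<in> A}"
    and Y_letters: "Y \<subseteq> {x. \<forall>n. x n \<in> A}" and sublanguage: "language Y \<subseteq> language X"
    and dendric: "\<And>w. w \<in> language X \<Longrightarrow> m \<le> length w \<Longrightarrow> ugraph_tree (ext_vertices X w) (ext_edges X w)"
begin

lemma eventually_new_left_ext_right_unique:
  "\<exists>N. \<forall>w\<in>language Y. N \<le> length w \<longrightarrow>
     (\<forall>a. a # w \<in> language X - language Y \<longrightarrow> card (right_ext X (a # w)) \<le> 1)"
proof -
  define S where "S n = {w \<in> language Y. length w = n}" for n
  have "\<exists>N. \<forall>n\<ge>N. \<forall>w\<in>S n. \<forall>v\<in>(\<lambda>a. a # w) ` left_ext X w - S (Suc n). card (right_ext X v) - 1 = 0"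
  proof (rule potential_eventually_vanishes[where m = m])
    show "finite (S n)" for n
      unfolding S_def by (rule finite_language_length[OF finite_A Y_letters])
    show "finite ((\<lambda>a. a # w) ` left_ext X w)" for w
      using finite_left_ext[OF finite_A X_letters] by blast
    show "S (Suc n) \<subseteq> (\<Union>w\<in>S n. (\<lambda>a. a # w) ` left_ext X w)" for n
    proof
      fix v assume "v \<in> S (Suc n)"
      then obtain a w where "v = a # w" "a # w \<in> language Y" "length w = n"
        by (cases v) (auto simp: S_def)
      then show "v \<in> (\<Union>w\<in>S n. (\<lambda>a. a # w) ` left_ext X w)"
        using sublanguage language_suffixD[of "[a]" w Y] by (auto simp: S_def left_ext_def)
    qed
    show "disjoint_family_on (\<lambda>w. (\<lambda>a. a # w) ` left_ext X w) (S n)" for n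
      by (auto simp: disjoint_family_on_def)
    show "(\<Sum>v\<in>(\<lambda>a. a # w) ` left_ext X w. card (right_ext X v) - 1) \<le> card (right_ext X w) - 1"
      if "m \<le> n" "w \<in> S n" for n w
      using that sublanguage tree_sum_right_branching_le[OF finite_A X_letters dendric]
      by (auto simp: S_def sum.reindex inj_on_def)
  qed
  then show ?thesis
    by (fastforce simp: S_def left_ext_def)
qed

lemma eventually_new_right_ext_left_unique:
  "\<exists>N. \<forall>w\<in>language Y. N \<le> length w \<longrightarrow>
     (\<forall>b. w @ [b] \<in> language X - language Y \<longrightarrow> card (left_ext X (w @ [b])) \<le> 1)"
proof -
  define S where "S n = {w \<in> language Y. length w = n}" for n
  have "\<exists>N. \<forall>n\<ge>N. \<forall>w\<in>S n. \<forall>v\<in>(\<lambda>b. w @ [b]) ` right_ext X w - S (Suc n). card (left_ext X v) - 1 = 0"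
  proof (rule potential_eventually_vanishes[where m = m])
    show "finite (S n)" for n
      unfolding S_def by (rule finite_language_length[OF finite_A Y_letters])
    show "finite ((\<lambda>b. w @ [b]) ` right_ext X w)" for w
      using finite_right_ext[OF finite_A X_letters] by blast
    show "S (Suc n) \<subseteq> (\<Union>w\<in>S n. (\<lambda>b. w @ [b]) ` right_ext X w)" for n
    proof
      fix v assume "v \<in> S (Suc n)"
      then obtain w b where "v = w @ [b]" "w @ [b] \<in> language Y" "length w = n"
        by (cases v rule: rev_cases) (auto simp: S_def)
      then show "v \<in> (\<Union>w\<in>S n. (\<lambda>b. w @ [b]) ` right_ext X w)"
        using sublanguage language_prefixD[of w "[b]" Y] by (auto simp: S_def right_ext_def)
    qed
    show "disjoint_family_on (\<lambda>w. (\<lambda>b. w @ [b]) ` right_ext X w) (S n)" for n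
      by (auto simp: disjoint_family_on_def)
    show "(\<Sum>v\<in>(\<lambda>b. w @ [b]) ` right_ext X w. card (left_ext X v) - 1) \<le> card (left_ext X w) - 1"
      if "m \<le> n" "w \<in> S n" for n w
      using that sublanguage tree_sum_left_branching_le[OF finite_A X_letters dendric]
      by (auto simp: S_def sum.reindex inj_on_def)
  qed
  then show ?thesis
    by (fastforce simp: S_def right_ext_def)
qed

lemma exit_propagates_left:
  assumes "m \<le> N"
    and entries: "\<And>w a. w \<in> language Y \<Longrightarrow> N \<le> length w \<Longrightarrow>
      a # w \<in> language X - language Y \<Longrightarrow> card (right_ext X (a # w)) \<le> 1"
    and exits: "\<And>w b. w \<in> language Y \<Longrightarrow> N \<le> length w \<Longrightarrow>
      w @ [b] \<in> language X - language Y \<Longrightarrow> card (left_ext X (w @ [b])) \<le> 1"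
    and p: "p \<in> language Y" "N \<le> length p" "p @ [c] \<notin> language Y"
  shows "z @ p @ [c] \<in> language X \<Longrightarrow> z @ p \<in> language Y"
proof (induction z)
  case (Cons a z)
  define w where "w = z @ p"
  have w: "w \<in> language Y" "N \<le> length w"
    using Cons language_suffixD[of "[a]"] p(2) by (auto simp: w_def)
  have awc: "a # w @ [c] \<in> language X"
    using Cons.prems by (simp add: w_def)
  have wc: "w @ [c] \<notin> language Y"
    using p(3) language_suffixD[of z "p @ [c]" Y] by (auto simp: w_def)
  show ?case
  proof (rule ccontr)
    assume "(a # z) @ p \<notin> language Y"
    then have aw: "a # w \<notin> language Y"
      by (simp add: w_def)
    \<comment> \<open>both \<open>aw\<close> and \<open>wc\<close> are new, so \<open>(a, c)\<close> is an isolated edge of \<open>\<E>\<^sub>1(w)\<close>\<close>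
    have "right_ext X (a # w) = {c}"
      using entries[OF w, of a] aw awc language_Cons_snoc_prefixD[OF awc]
      by (intro card_le_1_eq_singleton finite_right_ext[OF finite_A X_letters])
        (auto simp: right_ext_def)
    moreover have "left_ext X (w @ [c]) = {a}"
      using exits[OF w, of c] wc awc language_Cons_snoc_suffixD[OF awc]
      by (intro card_le_1_eq_singleton finite_left_ext[OF finite_A X_letters])
        (auto simp: left_ext_def)
    moreover have "ugraph_connected (ext_vertices X w) (ext_edges X w)"
      using dendric w sublanguage \<open>m \<le> N\<close> by (auto simp: ugraph_tree_def)
    ultimately have "left_ext X w = {a}"
      by (rule ext_graph_isolated_edge[rotated])
    moreover obtain a' where "a' # w \<in> language Y"
      using language_extend_left[OF w(1)] by blast
    ultimately show False
      using aw sublanguage by (auto simp: left_ext_def)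
  qed
qed (use p(1) in simp)

end

lemma irreducible_imp_minimal:
  fixes A :: "'a set" and X Y :: "(int \<Rightarrow> 'a) set"
  assumes finite_A: "finite A" and X: "shift_space A X" and "eventually_dendric X"
    and irreducible: "irreducible_shift X"
    and Y: "shift_space A Y" "Y \<noteq> {}" "Y \<subseteq> X"
  shows "Y = X"
proof (rule ccontr)
  assume "Y \<noteq> X"
  then obtain x where x: "x \<in> X" "x \<notin> Y"
    using Y(3) by blast
  have X_letters: "X \<subseteq> {x. \<forall>n. x n \<in> A}" and Y_letters: "Y \<subseteq> {x. \<forall>n. x n \<in> A}"
    using X Y(1) by (simp_all add: shift_space_def)
  have sublanguage: "language Y \<subseteq> language X"
    using Y(3) by (rule language_mono)
  obtain i n where u: "block x i n \<notin> language Y"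
    using shift_space_iff_blocks[OF Y(1)] x X_letters by blast
  obtain m where dendric:
    "\<And>w. w \<in> language X \<Longrightarrow> m \<le> length w \<Longrightarrow> ugraph_tree (ext_vertices X w) (ext_edges X w)"
    using \<open>eventually_dendric X\<close> by (auto simp: eventually_dendric_def)
  note setting = finite_A X_letters Y_letters sublanguage dendric
  obtain N1 where N1: "\<forall>w\<in>language Y. N1 \<le> length w \<longrightarrow>
      (\<forall>a. a # w \<in> language X - language Y \<longrightarrow> card (right_ext X (a # w)) \<le> 1)"
    using eventually_new_left_ext_right_unique[OF setting] by blast
  obtain N2 where N2: "\<forall>w\<in>language Y. N2 \<le> length w \<longrightarrow>
      (\<forall>b. w @ [b] \<in> language X - language Y \<longrightarrow> card (left_ext X (w @ [b])) \<le> 1)"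
    using eventually_new_right_ext_left_unique[OF setting] by blast
  define N where "N = max m (max N1 N2)"
  obtain y where "y \<in> Y"
    using Y(2) by blast
  then have y: "block y 0 N \<in> language Y"
    by (rule block_in_language)
  then have "block y 0 N \<in> language X"
    using sublanguage by blast
  then obtain t where t: "block y 0 N @ t @ block x i n \<in> language X"
    using irreducible block_in_language[OF x(1)] unfolding irreducible_shift_def by blast
  moreover have "block y 0 N @ t @ block x i n \<notin> language Y"
    using u language_suffixD[of "block y 0 N @ t"] by auto
  ultimately obtain p c s where p: "p \<in> language Y" "p @ [c] \<notin> language Y"
    "length (block y 0 N) \<le> length p" and pcs: "block y 0 N @ t @ block x i n = p @ c # s"
    using language_first_exit[OF y] by blast
  have "p @ [c] \<in> language X"
    using t language_prefixD[of "p @ [c]" s] by (simp add: pcs)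
  then obtain t' where "(p @ [c]) @ t' @ (p @ [c]) \<in> language X"
    using irreducible unfolding irreducible_shift_def by blast
  then have "(p @ [c] @ t') @ p \<in> language Y"
    using exit_propagates_left[OF setting, where N = N and p = p and c = c and z = "p @ [c] @ t'"] N1 N2 p
    by (simp add: N_def)
  then show False
    using p(2) language_prefixD[of "p @ [c]" "t' @ p"] by simp
qed

theorem mainTheorem13:
  fixes A :: "'a set" and X :: "(int \<Rightarrow> 'a) set"
  assumes "finite A"
    and "shift_space A X"
    and "X \<noteq> {}"
    and "eventually_dendric X"
  shows "minimal_shift A X \<longleftrightarrow> irreducible_shift X"
proof
  assume "minimal_shift A X"
  then show "irreducible_shift X"
    by (rule minimal_imp_irreducible[OF \<open>finite A\<close>])
next
  assume "irreducible_shift X"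
  then show "minimal_shift A X"
    using assms irreducible_imp_minimal[of A X] by (auto simp: minimal_shift_def)
qed

end
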